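(* There is an absolute constant $K>0$ such that the following holds. Let $\delta\in(0,1/2)$ and let $[\alpha,\alpha+\beta)\subseteq[0,1]$ with $\beta>0$. Then for every integer $k\ge 1$ with $k\le 1/(2\delta)+1$ there exists an online algorithm for the sorting problem with an array of $(1+2k\delta)n$ cells which, on every stream of $n$ reals $r_1,\dots,r_n\in[\alpha,\alpha+\beta)$, places all reals and achieves cost at most $\beta\cdot n^{1/(k+1)}\,\delta^{-K(k+1)}$ (i.e., cost $\beta\cdot n^{1/(k+1)}\delta^{-O(k+1)}$).
   Context: Online sorting with an array of $m$ cells: an array of $m$ initially empty cells ordered left to right; a stream of $n\le m$ reals arrives one at a time and an online algorithm must place each real irrevocably into an empty cell before the next is revealed. Here, for reals from $[\alpha,\alpha+\beta)$, the cost is $\sum_{i=0}^{n}|r_{i+1}-r_i|$ where $r_1,\dots,r_n$ are the reals in left-to-right order in the array and the sentinels are $r_0:=\alpha$, $r_{n+1}:=\alpha+\beta$. *)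

theory Defs
  imports Complex_Main
begin

text \<open>An online algorithm for an array of cells 0,...,m-1: given the list of reals
  already revealed (which, the algorithm being deterministic, determines all its previous
  placements) and the newly revealed real, it returns the cell where the new real is placed.\<close>
type_synonym online_alg = "real list \<Rightarrow> real \<Rightarrow> nat"

definition placement :: "online_alg \<Rightarrow> real list \<Rightarrow> nat \<Rightarrow> nat" where
  "placement A rs i = A (take i rs) (rs ! i)"

definition places_all :: "online_alg \<Rightarrow> nat \<Rightarrow> real list \<Rightarrow> bool" where
  "places_all A m rs \<longleftrightarrow>
     (\<forall>i < length rs. placement A rs i < m) \<and> inj_on (placement A rs) {..<length rs}"

definition array_order :: "online_alg \<Rightarrow> nat \<Rightarrow> real list \<Rightarrow> real list" where
  "array_order A m rs =
     map (\<lambda>c. rs ! (the_inv_into {..<length rs} (placement A rs) c))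
         (filter (\<lambda>c. c \<in> placement A rs ` {..<length rs}) [0..<m])"

fun path_cost :: "real list \<Rightarrow> real" where
  "path_cost (x # y # xs) = \<bar>y - x\<bar> + path_cost (y # xs)"
| "path_cost _ = 0"

definition sort_cost :: "real \<Rightarrow> real \<Rightarrow> online_alg \<Rightarrow> nat \<Rightarrow> real list \<Rightarrow> real" where
  "sort_cost \<alpha> \<beta> A m rs = path_cost (\<alpha> # array_order A m rs @ [\<alpha> + \<beta>])"

end

theory Submission
  imports Defs
begin

text \<open>With no spare cells (and whenever \<open>\<delta> n < 1\<close>) the array is simply
  filled from the left, at cost at most \<open>(n + 1) \<beta>\<close>. For level \<open>k + 1\<close>, cut \<open>[\<alpha>, \<alpha> + \<beta>)\<close> into
  \<open>b \<approx> (\<delta> n)\<^bsup>1/(k+2)\<^esup>\<close> buckets of equal width and the reals of each bucket into consecutive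
  batches of \<open>s \<approx> \<delta> n / b\<close> reals. Every batch receives, on arrival of its first real, a fresh
  block of \<open>(1 + 2 k \<delta>) s\<close> cells in which it is sorted by the level-\<open>k\<close> algorithm. There are at
  most \<open>n / s + b\<close> batches; they fit into \<open>(1 + 2 (k + 1) \<delta>) n\<close> cells because \<open>b s \<le> \<delta> n\<close> and,
  by the bound on \<open>k\<close>, \<open>1 + 2 k \<delta> \<le> 2\<close>. Reading the array block by block, each batch costs at
  most \<open>\<beta> / b\<close> times its level-\<open>k\<close> bound plus \<open>\<beta>\<close> for entering the block, so the cost is
  \<open>\<beta> (1 + (n / s + b) (1 + C\<^sub>k s\<^bsup>1/(k+1)\<^esup> / b)) = O(\<beta> C\<^sub>k n\<^bsup>1/(k+2)\<^esup> / \<delta>)\<close>, which gives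
  \<open>C\<^sub>k = 2 (16 / \<delta>)\<^bsup>k\<^esup> \<le> \<delta>\<^bsup>-5(k+1)\<^esup>\<close>.\<close>

section \<open>Path costs and array order\<close>

lemma path_cost_append_Cons:
  "path_cost (xs @ c # ys) = path_cost (xs @ [c]) + path_cost (c # ys)"
proof (induction xs)
  case Nil
  then show ?case by simp
next
  case (Cons x xs)
  then show ?case by (cases xs) auto
qed

lemma path_cost_remove_le: "path_cost (xs @ ys) \<le> path_cost (xs @ c # ys)"
proof (induction xs)
  case Nil
  then show ?case by (cases ys) auto
next
  case (Cons x xs)
  then show ?case by (cases xs; cases ys) auto
qed

lemma path_cost_le_width:
  assumes "xs \<noteq> []" and "set xs \<subseteq> {lo..hi}"
  shows "path_cost xs \<le> (hi - lo) * (real (length xs) - 1)"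
  using assms
proof (induction xs rule: path_cost.induct)
  case (1 x y xs)
  then have "\<bar>y - x\<bar> \<le> hi - lo" by (auto simp: abs_le_iff)
  with 1 show ?case by (simp add: algebra_simps)
qed simp_all

lemma path_cost_concat_le:
  assumes "a \<in> {lo..hi}" "e \<in> {lo..hi}"
    and "\<forall>g\<in>set gs. l g \<in> {lo..hi} \<and> r g \<in> {lo..hi}"
  shows "path_cost (a # concat (map F gs) @ [e])
     \<le> (hi - lo) + (\<Sum>g\<leftarrow>gs. (hi - lo) + path_cost (l g # F g @ [r g]))"
  using assms
proof (induction gs arbitrary: a)
  case Nil
  then show ?case by auto
next
  case (Cons g gs)
  let ?rest = "concat (map F gs) @ [e]"
  have "path_cost (a # concat (map F (g # gs)) @ [e]) = path_cost ([a] @ F g @ ?rest)"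
    by simp
  also have "\<dots> \<le> path_cost ([a] @ l g # F g @ ?rest)"
    by (rule path_cost_remove_le)
  also have "\<dots> = path_cost ((a # l g # F g) @ ?rest)" by simp
  also have "\<dots> \<le> path_cost ((a # l g # F g) @ r g # ?rest)"
    by (rule path_cost_remove_le)
  also have "\<dots> = \<bar>l g - a\<bar> + path_cost (l g # F g @ [r g]) + path_cost (r g # ?rest)"
    by (subst path_cost_append_Cons) simp
  also have "\<bar>l g - a\<bar> \<le> hi - lo" using Cons.prems by auto
  also have "path_cost (r g # ?rest)
      \<le> (hi - lo) + (\<Sum>g\<leftarrow>gs. (hi - lo) + path_cost (l g # F g @ [r g]))"
    using Cons by auto
  finally show ?case by simp
qed

lemma array_order_eq_map_nth:
  assumes "places_all A m rs" and "set L = {..<length rs}"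
    and "sorted_wrt (\<lambda>i j. placement A rs i < placement A rs j) L"
  shows "array_order A m rs = map (nth rs) L"
proof -
  let ?p = "placement A rs" and ?n = "length rs"
  have inj: "inj_on ?p {..<?n}" and lt: "\<forall>i<?n. ?p i < m"
    using assms(1) by (auto simp: places_all_def)
  have "sorted_wrt (<) (map ?p L)" using assms(3) by (simp add: sorted_wrt_map)
  then have "filter (\<lambda>c. c \<in> ?p ` {..<?n}) [0..<m] = map ?p L"
    using lt assms(2)
    by (intro sorted_distinct_set_unique) (auto simp: strict_sorted_iff sorted_wrt_filter)
  then have "array_order A m rs = map (\<lambda>c. rs ! the_inv_into {..<?n} ?p c) (map ?p L)"
    by (simp add: array_order_def)
  also have "\<dots> = map (nth rs) L"
    using inj assms(2) by (auto simp: the_inv_into_f_f)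
  finally show ?thesis .
qed

definition placement_order :: "online_alg \<Rightarrow> real list \<Rightarrow> nat list" where
  "placement_order A rs = sort_key (placement A rs) [0..<length rs]"

lemma set_placement_order: "set (placement_order A rs) = {..<length rs}"
  by (simp add: placement_order_def atLeast0LessThan)

lemma sorted_placement_order:
  assumes "places_all A m rs"
  shows "sorted_wrt (\<lambda>i j. placement A rs i < placement A rs j) (placement_order A rs)"
proof -
  have "inj_on (placement A rs) (set (placement_order A rs))"
    using assms by (simp add: places_all_def set_placement_order)
  then have "sorted_wrt (<) (map (placement A rs) (placement_order A rs))"
    by (simp add: placement_order_def strict_sorted_iff distinct_map)
  then show ?thesis by (simp add: sorted_wrt_map)
qed

lemma array_order_eq_placement_order:
  "places_all A m rs \<Longrightarrow> array_order A m rs = map (nth rs) (placement_order A rs)"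
  by (intro array_order_eq_map_nth set_placement_order sorted_placement_order)

lemma sort_cost_le_concat:
  assumes "array_order A M rs = concat (map arr gs)" and "0 \<le> w'"
    and "\<forall>g\<in>set gs. lo \<le> l g \<and> l g + w' \<le> lo + w \<and> path_cost (l g # arr g @ [l g + w']) \<le> w' * c"
    and "0 \<le> w"
  shows "sort_cost lo w A M rs \<le> w + real (length gs) * (w + w' * c)"
proof -
  have "sort_cost lo w A M rs = path_cost (lo # concat (map arr gs) @ [lo + w])"
    using assms(1) by (simp add: sort_cost_def)
  also have "\<dots> \<le> ((lo + w) - lo) + (\<Sum>g\<leftarrow>gs. ((lo + w) - lo) + path_cost (l g # arr g @ [l g + w']))"
    using assms by (intro path_cost_concat_le) auto
  also have "\<dots> \<le> w + (\<Sum>g\<leftarrow>gs. w + w' * c)"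
    using assms(3) by (simp add: sum_list_mono)
  also have "\<dots> = w + real (length gs) * (w + w' * c)"
    by (simp add: sum_list_triv)
  finally show ?thesis .
qed

section \<open>Sorting the reals of an interval\<close>

definition fill_left :: online_alg where
  "fill_left = (\<lambda>pre x. length pre)"

lemma placement_fill_left: "i < length rs \<Longrightarrow> placement fill_left rs i = i"
  by (simp add: placement_def fill_left_def)

lemma fill_left_places_all_and_array_order:
  assumes "length rs \<le> m"
  shows "places_all fill_left m rs \<and> array_order fill_left m rs = rs"
proof -
  have pa: "places_all fill_left m rs"
    using assms by (auto simp: places_all_def placement_fill_left inj_on_def)
  have "array_order fill_left m rs = map (nth rs) [0..<length rs]"
    by (rule array_order_eq_map_nth[OF pa])
      (auto simp: sorted_wrt_iff_nth_less placement_fill_left)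
  then show ?thesis using pa by (simp add: map_nth)
qed

definition interval_sorter :: "(real \<Rightarrow> real \<Rightarrow> online_alg) \<Rightarrow> nat \<Rightarrow> nat \<Rightarrow> real \<Rightarrow> bool" where
  "interval_sorter A m n c \<longleftrightarrow>
     (\<forall>lo w rs. 0 < w \<longrightarrow> length rs \<le> n \<longrightarrow> set rs \<subseteq> {lo..<lo + w} \<longrightarrow>
        places_all (A lo w) m rs \<and> sort_cost lo w (A lo w) m rs \<le> w * c)"

lemma interval_sorter_mono:
  "interval_sorter A m n c \<Longrightarrow> c \<le> c' \<Longrightarrow> interval_sorter A m n c'"
  unfolding interval_sorter_def by (meson mult_left_mono less_imp_le order_trans)

lemma interval_sorter_fill_left:
  assumes "n \<le> m"
  shows "interval_sorter (\<lambda>lo w. fill_left) m n (real n + 1)"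
  unfolding interval_sorter_def
proof (intro allI impI conjI)
  fix lo w :: real and rs :: "real list"
  assume w: "0 < w" and len: "length rs \<le> n" and rs: "set rs \<subseteq> {lo..<lo + w}"
  have fl: "places_all fill_left m rs \<and> array_order fill_left m rs = rs"
    using assms len by (intro fill_left_places_all_and_array_order) simp
  then show "places_all fill_left m rs" ..
  have "path_cost (lo # rs @ [lo + w]) \<le> w * (real (length rs) + 1)"
    using path_cost_le_width[of "lo # rs @ [lo + w]" lo "lo + w"] w rs
    by (force simp: algebra_simps)
  also have "\<dots> \<le> w * (real n + 1)" using w len by simp
  finally show "sort_cost lo w fill_left m rs \<le> w * (real n + 1)"
    using fl by (simp add: sort_cost_def)
qed

section \<open>Blockwise composition of algorithms\<close>

definition online_labelling :: "(real list \<Rightarrow> nat \<Rightarrow> nat) \<Rightarrow> bool" where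
  "online_labelling G \<longleftrightarrow> (\<forall>xs i j. j \<le> i \<longrightarrow> G (take (Suc i) xs) j = G xs j)"

definition group_positions :: "(real list \<Rightarrow> nat \<Rightarrow> nat) \<Rightarrow> real list \<Rightarrow> nat \<Rightarrow> nat list" where
  "group_positions G rs \<gamma> = filter (\<lambda>i. G rs i = \<gamma>) [0..<length rs]"

definition group_sublist :: "(real list \<Rightarrow> nat \<Rightarrow> nat) \<Rightarrow> real list \<Rightarrow> nat \<Rightarrow> real list" where
  "group_sublist G rs \<gamma> = map (nth rs) (group_positions G rs \<gamma>)"

text \<open>The reals labelled \<open>\<gamma>\<close> by \<open>G\<close> share the block of cells \<open>[\<gamma> S, \<gamma> S + S)\<close>, inside which
  the algorithm \<open>B x\<close> places \<open>x\<close> knowing only the earlier reals of its group.\<close>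
definition block_compose :: "(real list \<Rightarrow> nat \<Rightarrow> nat) \<Rightarrow> nat \<Rightarrow> (real \<Rightarrow> online_alg) \<Rightarrow> online_alg" where
  "block_compose G S B = (\<lambda>pre x.
     let ys = pre @ [x]; \<gamma> = G ys (length pre)
     in \<gamma> * S + B x (map (nth ys) (filter (\<lambda>j. G ys j = \<gamma>) [0..<length pre])) x)"

lemma sorted_wrt_concat_map:
  assumes "sorted_wrt (<) gs" and "\<forall>g\<in>set gs. sorted_wrt R (F g)"
    and "\<forall>g\<in>set gs. \<forall>g'\<in>set gs. g < g' \<longrightarrow> (\<forall>x\<in>set (F g). \<forall>y\<in>set (F g'). R x y)"
  shows "sorted_wrt R (concat (map F gs))"
  using assms by (induction gs) (auto simp: sorted_wrt_append)

lemma distinct_group_positions: "distinct (group_positions G rs \<gamma>)"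
  by (simp add: group_positions_def)

lemma mem_group_positions: "i \<in> set (group_positions G rs \<gamma>) \<longleftrightarrow> i < length rs \<and> G rs i = \<gamma>"
  by (auto simp: group_positions_def)

lemma placement_block_compose:
  assumes G: "online_labelling G" and B: "\<forall>i<length rs. B (rs ! i) = BB (G rs i)"
    and u: "u < length (group_positions G rs \<gamma>)"
  shows "placement (block_compose G S B) rs (group_positions G rs \<gamma> ! u)
           = \<gamma> * S + placement (BB \<gamma>) (group_sublist G rs \<gamma>) u"
proof -
  let ?P = "group_positions G rs \<gamma>"
  define i where "i = ?P ! u"
  have i: "i < length rs" "G rs i = \<gamma>"
    using nth_mem[OF u] by (simp_all add: mem_group_positions i_def)
  define before where "before = filter (\<lambda>j. G rs j = \<gamma>) [0..<i]"
  have "[0..<length rs] = [0..<i] @ i # [Suc i..<length rs]"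
    using i(1) upt_add_eq_append[of 0 i "length rs - i"] by (simp add: upt_conv_Cons)
  then have P: "?P = before @ i # filter (\<lambda>j. G rs j = \<gamma>) [Suc i..<length rs]"
    using i(2) by (simp add: group_positions_def before_def)
  then have "?P ! length before = i" "length before < length ?P" by simp_all
  then have t: "length before = u"
    using u distinct_group_positions nth_eq_iff_index_eq unfolding i_def by metis
  have pre: "take (Suc i) rs = take i rs @ [rs ! i]"
    using i(1) by (simp add: take_Suc_conv_app_nth)
  have label: "G (take (Suc i) rs) j = G rs j" if "j \<le> i" for j
    using G that by (simp add: online_labelling_def)
  have "map (nth (take (Suc i) rs)) (filter (\<lambda>j. G (take (Suc i) rs) j = \<gamma>) [0..<i])
      = map (nth rs) before"
    unfolding before_def using label by (auto intro!: map_cong filter_cong)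
  also have "\<dots> = take u (group_sublist G rs \<gamma>)"
    using P t by (simp add: group_sublist_def take_map)
  finally have "placement (block_compose G S B) rs i
      = \<gamma> * S + BB \<gamma> (take u (group_sublist G rs \<gamma>)) (rs ! i)"
    using B i label[of i] by (simp add: placement_def block_compose_def pre[symmetric] Let_def)
  moreover have "rs ! i = group_sublist G rs \<gamma> ! u" using u by (simp add: group_sublist_def i_def)
  ultimately show ?thesis by (simp add: placement_def i_def)
qed

lemma ex_group_positions_nth:
  assumes "i < length rs"
  obtains u where "u < length (group_positions G rs (G rs i))"
    and "group_positions G rs (G rs i) ! u = i"
  using assms by (metis in_set_conv_nth mem_group_positions)

locale block_composition =
  fixes G :: "real list \<Rightarrow> nat \<Rightarrow> nat" and S M :: nat and B :: "real \<Rightarrow> online_alg"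
    and BB :: "nat \<Rightarrow> online_alg" and rs :: "real list"
  assumes online: "online_labelling G" and S: "0 < S"
    and B: "\<forall>i<length rs. B (rs ! i) = BB (G rs i)"
    and blocks_places_all: "\<forall>\<gamma>\<in>G rs ` {..<length rs}. places_all (BB \<gamma>) S (group_sublist G rs \<gamma>)"
    and blocks_fit: "\<forall>i<length rs. (G rs i + 1) * S \<le> M"
begin

abbreviation "p \<equiv> placement (block_compose G S B) rs"

lemma placement_nth_group_positions:
  assumes "\<gamma> \<in> G rs ` {..<length rs}" "u < length (group_positions G rs \<gamma>)"
  shows "p (group_positions G rs \<gamma> ! u) = \<gamma> * S + placement (BB \<gamma>) (group_sublist G rs \<gamma>) u"
    and "placement (BB \<gamma>) (group_sublist G rs \<gamma>) u < S"
proof -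
  show "p (group_positions G rs \<gamma> ! u) = \<gamma> * S + placement (BB \<gamma>) (group_sublist G rs \<gamma>) u"
    using placement_block_compose[OF online B assms(2)] .
  show "placement (BB \<gamma>) (group_sublist G rs \<gamma>) u < S"
    using blocks_places_all assms by (auto simp: places_all_def group_sublist_def)
qed

lemma places_all: "places_all (block_compose G S B) M rs"
  unfolding places_all_def
proof
  show "\<forall>i<length rs. p i < M"
  proof (intro allI impI)
    fix i assume i: "i < length rs"
    obtain u where u: "u < length (group_positions G rs (G rs i))"
      and ui: "group_positions G rs (G rs i) ! u = i"
      using ex_group_positions_nth[OF i] .
    have "p i < G rs i * S + S"
      using placement_nth_group_positions[OF _ u] i ui by simp
    also have "\<dots> \<le> M" using blocks_fit i by (simp add: algebra_simps)
    finally show "p i < M" .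
  qed
  show "inj_on p {..<length rs}"
  proof (rule inj_onI)
    fix i j assume i: "i \<in> {..<length rs}" and j: "j \<in> {..<length rs}" and pij: "p i = p j"
    obtain u where u: "u < length (group_positions G rs (G rs i))"
      and ui: "group_positions G rs (G rs i) ! u = i"
      using ex_group_positions_nth i by blast
    obtain v where v: "v < length (group_positions G rs (G rs j))"
      and vj: "group_positions G rs (G rs j) ! v = j"
      using ex_group_positions_nth j by blast
    define qi where "qi = placement (BB (G rs i)) (group_sublist G rs (G rs i)) u"
    define qj where "qj = placement (BB (G rs j)) (group_sublist G rs (G rs j)) v"
    have "p i = G rs i * S + qi" "qi < S"
      using placement_nth_group_positions[OF _ u] i ui by (simp_all add: qi_def)
    moreover have "p j = G rs j * S + qj" "qj < S"
      using placement_nth_group_positions[OF _ v] j vj by (simp_all add: qj_def)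
    ultimately have "G rs i = p i div S" "G rs j = p j div S" "qi = p i mod S" "qj = p j mod S"
      by simp_all
    then have g: "G rs i = G rs j" and "qi = qj" using pij by simp_all
    then have "placement (BB (G rs i)) (group_sublist G rs (G rs i)) u
         = placement (BB (G rs i)) (group_sublist G rs (G rs i)) v"
      by (simp add: qi_def qj_def)
    moreover have "inj_on (placement (BB (G rs i)) (group_sublist G rs (G rs i)))
        {..<length (group_sublist G rs (G rs i))}"
      using blocks_places_all i by (simp add: places_all_def)
    moreover have "u < length (group_sublist G rs (G rs i))"
      and "v < length (group_sublist G rs (G rs i))"
      using u v g by (simp_all add: group_sublist_def)
    ultimately have "u = v" by (meson inj_onD lessThan_iff)
    then show "i = j" using ui vj g by metis
  qed
qed

definition block_positions :: "nat \<Rightarrow> nat list" where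
  "block_positions \<gamma> =
     map (nth (group_positions G rs \<gamma>)) (placement_order (BB \<gamma>) (group_sublist G rs \<gamma>))"

lemma set_block_positions: "set (block_positions \<gamma>) = set (group_positions G rs \<gamma>)"
  by (auto simp: block_positions_def set_placement_order group_sublist_def in_set_conv_nth)

lemma array_order_block:
  assumes "\<gamma> \<in> G rs ` {..<length rs}"
  shows "array_order (BB \<gamma>) S (group_sublist G rs \<gamma>) = map (nth rs) (block_positions \<gamma>)"
  using blocks_places_all assms set_placement_order[of "BB \<gamma>" "group_sublist G rs \<gamma>"]
  by (auto simp: array_order_eq_placement_order block_positions_def group_sublist_def)

lemma sorted_block_positions:
  "sorted_wrt (\<lambda>i j. p i < p j)
     (concat (map block_positions (sorted_list_of_set (G rs ` {..<length rs}))))"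
proof (rule sorted_wrt_concat_map)
  let ?\<Gamma> = "G rs ` {..<length rs}" and ?P = "group_positions G rs" and ?sub = "group_sublist G rs"
  show "sorted_wrt (<) (sorted_list_of_set ?\<Gamma>)" by simp
  show "\<forall>\<gamma>\<in>set (sorted_list_of_set ?\<Gamma>). sorted_wrt (\<lambda>i j. p i < p j) (block_positions \<gamma>)"
  proof
    fix \<gamma> assume "\<gamma> \<in> set (sorted_list_of_set ?\<Gamma>)"
    then have \<gamma>: "\<gamma> \<in> ?\<Gamma>" by simp
    have "sorted_wrt (\<lambda>u v. placement (BB \<gamma>) (?sub \<gamma>) u < placement (BB \<gamma>) (?sub \<gamma>) v)
        (placement_order (BB \<gamma>) (?sub \<gamma>))"
      using blocks_places_all \<gamma> by (intro sorted_placement_order) auto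
    then have "sorted_wrt (\<lambda>u v. p (?P \<gamma> ! u) < p (?P \<gamma> ! v)) (placement_order (BB \<gamma>) (?sub \<gamma>))"
      using placement_nth_group_positions(1)[OF \<gamma>] set_placement_order[of "BB \<gamma>" "?sub \<gamma>"]
      by (auto simp: group_sublist_def intro: sorted_wrt_mono_rel[rotated])
    then show "sorted_wrt (\<lambda>i j. p i < p j) (block_positions \<gamma>)"
      by (simp add: block_positions_def sorted_wrt_map)
  qed
  show "\<forall>\<gamma>\<in>set (sorted_list_of_set ?\<Gamma>). \<forall>\<gamma>'\<in>set (sorted_list_of_set ?\<Gamma>). \<gamma> < \<gamma>' \<longrightarrow>
      (\<forall>x\<in>set (block_positions \<gamma>). \<forall>y\<in>set (block_positions \<gamma>'). p x < p y)"
  proof (intro ballI impI)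
    fix \<gamma> \<gamma>' x y
    assume "\<gamma> \<in> set (sorted_list_of_set ?\<Gamma>)" "\<gamma>' \<in> set (sorted_list_of_set ?\<Gamma>)" "\<gamma> < \<gamma>'"
      and "x \<in> set (block_positions \<gamma>)" "y \<in> set (block_positions \<gamma>')"
    then have \<gamma>: "\<gamma> \<in> ?\<Gamma>" "\<gamma>' \<in> ?\<Gamma>" and "x \<in> set (?P \<gamma>)" "y \<in> set (?P \<gamma>')"
      by (simp_all add: set_block_positions)
    then obtain u v where u: "u < length (?P \<gamma>)" "x = ?P \<gamma> ! u"
      and v: "v < length (?P \<gamma>')" "y = ?P \<gamma>' ! v"
      by (auto simp: in_set_conv_nth)
    have "p x < \<gamma> * S + S" using placement_nth_group_positions[OF \<gamma>(1) u(1)] u(2) by simp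
    also have "\<dots> \<le> \<gamma>' * S" using \<open>\<gamma> < \<gamma>'\<close> by (metis Suc_leI mult_Suc mult_le_mono1 add.commute)
    also have "\<dots> \<le> p y" using placement_nth_group_positions[OF \<gamma>(2) v(1)] v(2) by simp
    finally show "p x < p y" .
  qed
qed

lemma array_order:
  "array_order (block_compose G S B) M rs
     = concat (map (\<lambda>\<gamma>. array_order (BB \<gamma>) S (group_sublist G rs \<gamma>))
                   (sorted_list_of_set (G rs ` {..<length rs})))"
proof -
  let ?L = "concat (map block_positions (sorted_list_of_set (G rs ` {..<length rs})))"
  have "set ?L = {..<length rs}"
    by (auto simp: set_block_positions mem_group_positions)
  then have "array_order (block_compose G S B) M rs = map (nth rs) ?L"
    using array_order_eq_map_nth[OF places_all _ sorted_block_positions] by blast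
  also have "\<dots> = concat (map (\<lambda>\<gamma>. array_order (BB \<gamma>) S (group_sublist G rs \<gamma>))
                   (sorted_list_of_set (G rs ` {..<length rs})))"
    unfolding map_concat map_map
    by (intro arg_cong[where f = concat] map_cong refl) (simp add: array_order_block)
  finally show ?thesis .
qed

end

section \<open>Batches\<close>

text \<open>Numbers the distinct values of \<open>\<kappa> 0, \<kappa> 1, \<dots>\<close> by \<open>0, 1, \<dots>\<close> in order of first appearance.\<close>
definition appearance_index :: "(nat \<Rightarrow> 'a) \<Rightarrow> nat \<Rightarrow> nat" where
  "appearance_index \<kappa> i = card (\<kappa> ` {..<LEAST j. \<kappa> j = \<kappa> i})"

lemma first_occurrence_le:
  fixes \<kappa> :: "nat \<Rightarrow> 'a"
  shows "(LEAST j. \<kappa> j = \<kappa> i) \<le> i"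
  by (simp add: Least_le)

lemma first_occurrence_fresh:
  fixes \<kappa> :: "nat \<Rightarrow> 'a"
  shows "\<kappa> (LEAST j. \<kappa> j = \<kappa> i) \<notin> \<kappa> ` {..<LEAST j. \<kappa> j = \<kappa> i}"
proof
  assume "\<kappa> (LEAST j. \<kappa> j = \<kappa> i) \<in> \<kappa> ` {..<LEAST j. \<kappa> j = \<kappa> i}"
  then obtain j where "j < (LEAST j. \<kappa> j = \<kappa> i)" "\<kappa> j = \<kappa> i"
    by (auto simp: LeastI[of "\<lambda>j. \<kappa> j = \<kappa> i" i])
  then show False using not_less_Least by blast
qed

lemma card_image_lessThan_strict_mono:
  fixes \<kappa> :: "nat \<Rightarrow> 'a"
  assumes "a < b" "\<kappa> a \<notin> \<kappa> ` {..<a}"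
  shows "card (\<kappa> ` {..<a}) < card (\<kappa> ` {..<b})"
proof (rule psubset_card_mono)
  have "\<kappa> ` {..<a} \<subseteq> \<kappa> ` {..<b}" using assms(1) by (intro image_mono) auto
  moreover have "\<kappa> a \<in> \<kappa> ` {..<b}" using assms(1) by simp
  ultimately show "\<kappa> ` {..<a} \<subset> \<kappa> ` {..<b}" using assms(2) by blast
qed simp

lemma Least_cong_upto:
  fixes P Q :: "nat \<Rightarrow> bool"
  assumes "P a" and "\<forall>x\<le>a. P x = Q x"
  shows "Least P = Least Q"
proof -
  have "Q a" using assms by simp
  have "Least P \<le> a" "Least Q \<le> a" using \<open>P a\<close> \<open>Q a\<close> by (simp_all add: Least_le)
  then have "Q (Least P)" "P (Least Q)"
    using LeastI[of P, OF \<open>P a\<close>] LeastI[of Q, OF \<open>Q a\<close>] assms(2) by simp_all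
  then show ?thesis by (simp add: Least_le order.antisym)
qed

lemma appearance_index_cong:
  assumes "\<forall>j\<le>i. \<kappa>' j = \<kappa> j"
  shows "appearance_index \<kappa>' i = appearance_index \<kappa> i"
proof -
  have "(LEAST j. \<kappa>' j = \<kappa>' i) = (LEAST j. \<kappa> j = \<kappa> i)"
    using assms by (intro Least_cong_upto[of _ i]) auto
  moreover have "\<kappa>' ` {..<LEAST j. \<kappa> j = \<kappa> i} = \<kappa> ` {..<LEAST j. \<kappa> j = \<kappa> i}"
    using assms first_occurrence_le[of \<kappa> i] by (intro image_cong) auto
  ultimately show ?thesis by (simp add: appearance_index_def)
qed

lemma appearance_index_eq_imp_eq:
  fixes \<kappa> :: "nat \<Rightarrow> 'a"
  assumes "appearance_index \<kappa> i = appearance_index \<kappa> j"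
  shows "\<kappa> i = \<kappa> j"
proof -
  define F where "F = (\<lambda>i. LEAST i'. \<kappa> i' = \<kappa> i)"
  have index: "appearance_index \<kappa> k = card (\<kappa> ` {..<F k})" for k
    by (simp add: appearance_index_def F_def)
  have "\<not> F a < F b" if "appearance_index \<kappa> a = appearance_index \<kappa> b" for a b
    using card_image_lessThan_strict_mono[of "F a" "F b" \<kappa>] first_occurrence_fresh[of \<kappa> a] that
    by (auto simp: index F_def)
  then have "F i = F j" using assms by (metis linorder_neqE_nat)
  moreover have "\<kappa> (F k) = \<kappa> k" for k
    unfolding F_def by (rule LeastI) simp
  ultimately show ?thesis by metis
qed

lemma appearance_index_less_card:
  assumes "i < n"
  shows "appearance_index \<kappa> i < card (\<kappa> ` {..<n})"
  using assms first_occurrence_le[of \<kappa> i] first_occurrence_fresh[of \<kappa> i]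
  unfolding appearance_index_def by (intro card_image_lessThan_strict_mono) auto

lemma card_image_appearance_index_le:
  "card (appearance_index \<kappa> ` {..<n}) \<le> card (\<kappa> ` {..<n})"
proof -
  have "appearance_index \<kappa> ` {..<n} = (\<lambda>k. card (\<kappa> ` {..<LEAST j. \<kappa> j = k})) ` \<kappa> ` {..<n}"
    by (simp add: appearance_index_def image_image)
  then show ?thesis by (simp add: card_image_le)
qed

text \<open>Numbering the batch keys in order of first appearance, rather than directly, makes the batch
  index of a real depend only on the reals up to it.\<close>

definition rank_in_class :: "(real \<Rightarrow> nat) \<Rightarrow> real list \<Rightarrow> nat \<Rightarrow> nat" where
  "rank_in_class f xs i = length (filter (\<lambda>y. f y = f (xs ! i)) (take i xs))"

definition batch_key :: "(real \<Rightarrow> nat) \<Rightarrow> nat \<Rightarrow> real list \<Rightarrow> nat \<Rightarrow> nat \<times> nat" where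
  "batch_key f s xs i = (f (xs ! i), rank_in_class f xs i div s)"

definition batch_index :: "(real \<Rightarrow> nat) \<Rightarrow> nat \<Rightarrow> real list \<Rightarrow> nat \<Rightarrow> nat" where
  "batch_index f s xs = appearance_index (batch_key f s xs)"

lemma online_labelling_batch_index: "online_labelling (batch_index f s)"
  unfolding online_labelling_def batch_index_def
  by (auto intro!: appearance_index_cong simp: batch_key_def rank_in_class_def min_def)

lemma batch_index_eq_imp_class_eq:
  "batch_index f s xs i = batch_index f s xs j \<Longrightarrow> f (xs ! i) = f (xs ! j)"
  unfolding batch_index_def by (drule appearance_index_eq_imp_eq) (simp add: batch_key_def)

lemma length_filter_take_less:
  assumes "i < length xs" "Q (xs ! i)"
  shows "length (filter Q (take i xs)) < length (filter Q xs)"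
proof -
  have "xs = take i xs @ xs ! i # drop (Suc i) xs" using assms(1) by (rule id_take_nth_drop)
  then have "filter Q xs = filter Q (take i xs) @ xs ! i # filter Q (drop (Suc i) xs)"
    using assms(2) by (metis filter.simps(2) filter_append)
  then show ?thesis by simp
qed

lemma rank_in_class_less_count:
  "i < length xs \<Longrightarrow> rank_in_class f xs i < length (filter (\<lambda>y. f y = f (xs ! i)) xs)"
  unfolding rank_in_class_def by (rule length_filter_take_less) simp_all

lemma rank_in_class_strict_mono:
  assumes "i < j" "j \<le> length xs" "f (xs ! i) = f (xs ! j)"
  shows "rank_in_class f xs i < rank_in_class f xs j"
proof -
  have "length (filter (\<lambda>y. f y = f (xs ! j)) (take i (take j xs)))
      < length (filter (\<lambda>y. f y = f (xs ! j)) (take j xs))"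
    using assms by (intro length_filter_take_less) simp_all
  then show ?thesis using assms(1,3) by (simp add: rank_in_class_def min_absorb2)
qed

lemma inj_on_rank_in_class: "inj_on (rank_in_class f xs) {i. i < length xs \<and> f (xs ! i) = j}"
proof (rule inj_onI)
  fix x y
  assume x: "x \<in> {i. i < length xs \<and> f (xs ! i) = j}"
    and y: "y \<in> {i. i < length xs \<and> f (xs ! i) = j}" and eq: "rank_in_class f xs x = rank_in_class f xs y"
  show "x = y"
  proof (rule linorder_cases)
    assume "x < y"
    then show ?thesis using x y eq rank_in_class_strict_mono[of x y xs f] by simp
  next
    assume "y < x"
    then show ?thesis using x y eq rank_in_class_strict_mono[of y x xs f] by simp
  qed
qed

lemma card_batch_le:
  assumes "0 < s"
  shows "card {i. i < length xs \<and> batch_index f s xs i = \<gamma>} \<le> s"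
proof (cases "\<exists>i0<length xs. batch_index f s xs i0 = \<gamma>")
  case False
  then have "{i. i < length xs \<and> batch_index f s xs i = \<gamma>} = {}" by blast
  then show ?thesis by (metis card.empty le0)
next
  case True
  then obtain i0 where i0: "i0 < length xs" "batch_index f s xs i0 = \<gamma>" by blast
  obtain j c where jc: "batch_key f s xs i0 = (j, c)" by fastforce
  let ?A = "{i. i < length xs \<and> batch_index f s xs i = \<gamma>}"
  have key: "batch_key f s xs i = (j, c)" if "i \<in> ?A" for i
    using that i0 jc appearance_index_eq_imp_eq unfolding batch_index_def by fastforce
  have "?A \<subseteq> {i. i < length xs \<and> f (xs ! i) = j}" using key by (auto simp: batch_key_def)
  then have "inj_on (rank_in_class f xs) ?A" by (rule inj_on_subset[OF inj_on_rank_in_class])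
  then have "card ?A = card (rank_in_class f xs ` ?A)" by (simp add: card_image)
  also have "\<dots> \<le> card {c * s..<c * s + s}"
  proof (rule card_mono)
    show "rank_in_class f xs ` ?A \<subseteq> {c * s..<c * s + s}"
    proof
      fix z assume "z \<in> rank_in_class f xs ` ?A"
      then have "z div s = c" using key by (auto simp: batch_key_def)
      then have "c * s + z mod s = z" by (metis div_mult_mod_eq)
      moreover have "z mod s < s" using assms by simp
      ultimately show "z \<in> {c * s..<c * s + s}" by (simp only: atLeastLessThan_iff) linarith
    qed
  qed simp
  finally show ?thesis by simp
qed

lemma length_eq_sum_class_counts:
  fixes f :: "'a \<Rightarrow> nat"
  assumes "\<forall>y\<in>set xs. f y < b"
  shows "length xs = (\<Sum>j<b. length (filter (\<lambda>y. f y = j) xs))"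
  using assms
proof (induction xs)
  case (Cons x xs)
  have "(\<Sum>j<b. length (filter (\<lambda>y. f y = j) (x # xs)))
      = (\<Sum>j<b. (if j = f x then 1 else 0) + length (filter (\<lambda>y. f y = j) xs))"
    by (intro sum.cong) auto
  also have "\<dots> = (\<Sum>j<b. (if j = f x then 1 else 0)) + (\<Sum>j<b. length (filter (\<lambda>y. f y = j) xs))"
    by (rule sum.distrib)
  also have "(\<Sum>j<b. (if j = f x then 1 else 0 :: nat)) = 1"
    using Cons.prems by (subst sum.delta) auto
  finally show ?case using Cons by simp
qed simp

lemma sum_div_le_div_sum:
  fixes g :: "'a \<Rightarrow> nat"
  assumes "0 < s"
  shows "(\<Sum>x\<in>A. g x div s) \<le> (\<Sum>x\<in>A. g x) div s"
proof -
  have "(\<Sum>x\<in>A. g x div s) * s \<le> (\<Sum>x\<in>A. g x)"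
    unfolding sum_distrib_right by (intro sum_mono) simp
  then show ?thesis using assms by (simp add: less_eq_div_iff_mult_less_eq)
qed

lemma card_batch_keys_le:
  assumes s: "0 < s" and f: "\<forall>y\<in>set xs. f y < b"
  shows "card (batch_key f s xs ` {..<length xs}) \<le> length xs div s + b"
proof -
  define N where "N = (\<lambda>j. length (filter (\<lambda>y. f y = j) xs))"
  have "batch_key f s xs ` {..<length xs} \<subseteq> (\<Union>j<b. {j} \<times> {..N j div s})"
  proof
    fix k assume "k \<in> batch_key f s xs ` {..<length xs}"
    then obtain i where i: "i < length xs" "k = batch_key f s xs i" by auto
    have "rank_in_class f xs i \<le> N (f (xs ! i))"
      using rank_in_class_less_count[OF i(1), of f] by (simp add: N_def)
    then have "rank_in_class f xs i div s \<le> N (f (xs ! i)) div s" by (rule div_le_mono)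
    then show "k \<in> (\<Union>j<b. {j} \<times> {..N j div s})"
      using f i by (auto simp: batch_key_def)
  qed
  then have "card (batch_key f s xs ` {..<length xs}) \<le> card (\<Union>j<b. {j} \<times> {..N j div s})"
    by (intro card_mono) auto
  also have "\<dots> \<le> (\<Sum>j<b. card ({j} \<times> {..N j div s}))" by (rule card_UN_le) simp
  also have "\<dots> = (\<Sum>j<b. N j div s) + b" by (simp add: sum_Suc)
  also have "(\<Sum>j<b. N j div s) \<le> (\<Sum>j<b. N j) div s" using s by (rule sum_div_le_div_sum)
  also have "(\<Sum>j<b. N j) = length xs"
    using length_eq_sum_class_counts[OF f] by (simp add: N_def)
  finally show ?thesis by simp
qed

lemma length_group_sublist_batch_index_le:
  "0 < s \<Longrightarrow> length (group_sublist (batch_index f s) xs \<gamma>) \<le> s"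
  using card_batch_le[of s xs f \<gamma>]
  by (simp add: group_sublist_def group_positions_def length_filter_conv_card cong: conj_cong)

lemma batch_count_le:
  assumes "0 < s" "\<forall>y\<in>set xs. f y < b"
  shows "card (batch_index f s xs ` {..<length xs}) \<le> length xs div s + b"
  using card_image_appearance_index_le[of "batch_key f s xs" "length xs"]
    card_batch_keys_le[OF assms]
  unfolding batch_index_def by linarith

lemma batch_index_less_count:
  assumes "0 < s" "\<forall>y\<in>set xs. f y < b" "i < length xs"
  shows "batch_index f s xs i < length xs div s + b"
  using appearance_index_less_card[OF assms(3), of "batch_key f s xs"]
    card_batch_keys_le[OF assms(1,2)]
  unfolding batch_index_def by linarith

section \<open>Bucketing\<close>

definition bucket :: "real \<Rightarrow> real \<Rightarrow> nat \<Rightarrow> real \<Rightarrow> nat" where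
  "bucket lo w b x = nat \<lfloor>(x - lo) * real b / w\<rfloor>"

lemma bucket_bounds:
  assumes "x \<in> {lo..<lo + w}" "0 < w" "0 < b"
  shows "bucket lo w b x < b"
    and "lo + real (bucket lo w b x) * (w / real b) \<le> x"
    and "x < lo + real (bucket lo w b x) * (w / real b) + w / real b"
proof -
  define z where "z = (x - lo) * real b / w"
  have "0 \<le> z" "z < real b"
    using assms by (simp_all add: z_def pos_divide_less_eq)
  then have j: "real (bucket lo w b x) \<le> z" "z < real (bucket lo w b x) + 1"
    "real (bucket lo w b x) < real b"
    by (simp_all add: bucket_def z_def[symmetric]) linarith+
  then show "bucket lo w b x < b" by simp
  have x: "x = lo + z * (w / real b)" using assms by (simp add: z_def)
  have "real (bucket lo w b x) * (w / real b) \<le> z * (w / real b)"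
    using j(1) assms by (intro mult_right_mono) auto
  then show "lo + real (bucket lo w b x) * (w / real b) \<le> x" using x by linarith
  have "z * (w / real b) < (real (bucket lo w b x) + 1) * (w / real b)"
    using j(2) assms by (intro mult_strict_right_mono) auto
  then show "x < lo + real (bucket lo w b x) * (w / real b) + w / real b"
    using x by (simp only: distrib_right mult_1_left)
qed

definition batch_class :: "(real \<Rightarrow> nat) \<Rightarrow> nat \<Rightarrow> real list \<Rightarrow> nat \<Rightarrow> nat" where
  "batch_class f s xs \<gamma> = f (xs ! hd (group_positions (batch_index f s) xs \<gamma>))"

lemma batch_class_batch_index:
  assumes "i < length xs"
  shows "batch_class f s xs (batch_index f s xs i) = f (xs ! i)"
proof -
  let ?P = "group_positions (batch_index f s) xs (batch_index f s xs i)"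
  have "i \<in> set ?P" using assms by (simp add: mem_group_positions)
  then have "hd ?P \<in> set ?P" by (metis empty_iff hd_in_set set_empty)
  then have "batch_index f s xs (hd ?P) = batch_index f s xs i" by (simp add: mem_group_positions)
  then show ?thesis unfolding batch_class_def by (rule batch_index_eq_imp_class_eq)
qed

lemma batch_within_bucket:
  assumes rs: "set rs \<subseteq> {lo..<lo + w}" and w: "0 < w" and b: "0 < b"
    and \<gamma>: "\<gamma> \<in> batch_index (bucket lo w b) s rs ` {..<length rs}"
  defines "l \<equiv> lo + real (batch_class (bucket lo w b) s rs \<gamma>) * (w / real b)"
  shows "lo \<le> l" and "l + w / real b \<le> lo + w"
    and "set (group_sublist (batch_index (bucket lo w b) s) rs \<gamma>) \<subseteq> {l..<l + w / real b}"
proof -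
  let ?G = "batch_index (bucket lo w b) s"
  have in_bucket: "rs ! i \<in> {l..<l + w / real b}" if "i < length rs" "?G rs i = \<gamma>" for i
  proof -
    have "rs ! i \<in> {lo..<lo + w}" using rs nth_mem[OF that(1)] by blast
    moreover have "batch_class (bucket lo w b) s rs \<gamma> = bucket lo w b (rs ! i)"
      using batch_class_batch_index[OF that(1), of "bucket lo w b" s] that(2) by simp
    ultimately show ?thesis using bucket_bounds(2,3)[of "rs ! i" lo w b] w b by (simp add: l_def)
  qed
  obtain i where i: "i < length rs" "?G rs i = \<gamma>" using \<gamma> by auto
  have "batch_class (bucket lo w b) s rs \<gamma> = bucket lo w b (rs ! i)"
    using batch_class_batch_index[OF i(1), of "bucket lo w b" s] i(2) by simp
  moreover have "bucket lo w b (rs ! i) < b" using bucket_bounds(1) rs w b nth_mem[OF i(1)] by blast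
  ultimately have "(real (batch_class (bucket lo w b) s rs \<gamma>) + 1) * (w / real b)
      \<le> real b * (w / real b)"
    using w by (intro mult_right_mono) auto
  then show "lo \<le> l" "l + w / real b \<le> lo + w" using w b by (simp_all add: l_def algebra_simps)
  show "set (group_sublist ?G rs \<gamma>) \<subseteq> {l..<l + w / real b}"
    using in_bucket by (auto simp: group_sublist_def mem_group_positions)
qed

definition batched ::
  "(real \<Rightarrow> real \<Rightarrow> online_alg) \<Rightarrow> nat \<Rightarrow> nat \<Rightarrow> nat \<Rightarrow> real \<Rightarrow> real \<Rightarrow> online_alg" where
  "batched A b s S lo w = block_compose (batch_index (bucket lo w b) s) S
     (\<lambda>x. A (lo + real (bucket lo w b x) * (w / real b)) (w / real b))"

lemma interval_sorter_batched:
  assumes A: "interval_sorter A S s c" and s: "0 < s" and b: "0 < b" and "0 < S" "0 \<le> c"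
    and fit: "(n div s + b) * S \<le> M"
  shows "interval_sorter (batched A b s S) M n (1 + (real n / real s + real b) * (1 + c / real b))"
  unfolding interval_sorter_def
proof (intro allI impI conjI)
  fix lo w :: real and rs :: "real list"
  assume w: "0 < w" and n: "length rs \<le> n" and rs: "set rs \<subseteq> {lo..<lo + w}"
  define G where "G = batch_index (bucket lo w b) s"
  define \<Gamma> where "\<Gamma> = G rs ` {..<length rs}"
  define w' where "w' = w / real b"
  define l where "l = (\<lambda>\<gamma>. lo + real (batch_class (bucket lo w b) s rs \<gamma>) * w')"
  define BB where "BB = (\<lambda>\<gamma>. A (l \<gamma>) w')"
  have w': "0 < w'" using w b by (simp add: w'_def)
  note bucket = batch_within_bucket[OF rs w b, of _ s, folded G_def \<Gamma>_def w'_def]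
  have batch: "places_all (BB \<gamma>) S (group_sublist G rs \<gamma>) \<and>
      sort_cost (l \<gamma>) w' (BB \<gamma>) S (group_sublist G rs \<gamma>) \<le> w' * c" if "\<gamma> \<in> \<Gamma>" for \<gamma>
    using A w' bucket(3)[OF that] length_group_sublist_batch_index_le[OF s]
    by (simp add: interval_sorter_def BB_def G_def l_def)
  have bucket_less: "\<forall>y\<in>set rs. bucket lo w b y < b" using bucket_bounds(1) rs w b by blast
  have n_s: "length rs div s \<le> n div s" using n by (rule div_le_mono)
  have count: "card \<Gamma> \<le> n div s + b"
    using batch_count_le[OF s bucket_less] n_s unfolding \<Gamma>_def G_def by linarith
  have "(G rs i + 1) * S \<le> M" if "i < length rs" for i
  proof -
    have "G rs i + 1 \<le> n div s + b"
      using batch_index_less_count[OF s bucket_less that] n_s unfolding G_def by linarith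
    then show ?thesis using fit by (meson mult_le_mono1 order_trans)
  qed
  then interpret block_composition G S M "\<lambda>x. A (lo + real (bucket lo w b x) * w') w'" BB rs
    using batch \<open>0 < S\<close> online_labelling_batch_index
    by unfold_locales (auto simp: \<Gamma>_def G_def BB_def l_def batch_class_batch_index)
  have alg: "batched A b s S lo w = block_compose G S (\<lambda>x. A (lo + real (bucket lo w b x) * w') w')"
    by (simp add: batched_def G_def w'_def)
  show "places_all (batched A b s S lo w) M rs" using places_all by (simp add: alg)
  have "sort_cost lo w (batched A b s S lo w) M rs
      \<le> w + real (length (sorted_list_of_set \<Gamma>)) * (w + w' * c)"
    unfolding alg using batch bucket(1,2) w w'
    by (intro sort_cost_le_concat[OF array_order[folded \<Gamma>_def], where l = l])
      (auto simp: \<Gamma>_def sort_cost_def l_def)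
  also have "\<dots> \<le> w + (real n / real s + real b) * (w + w' * c)"
  proof (intro add_left_mono mult_right_mono)
    have "real (card \<Gamma>) \<le> real (n div s) + real b" using count by linarith
    moreover have "real (n div s) \<le> real n / real s" by (rule of_nat_div_le_of_nat)
    ultimately show "real (length (sorted_list_of_set \<Gamma>)) \<le> real n / real s + real b"
      by simp
  qed (use w' w \<open>0 \<le> c\<close> in simp)
  also have "\<dots> = w * (1 + (real n / real s + real b) * (1 + c / real b))"
    using b s by (simp add: w'_def field_simps)
  finally show "sort_cost lo w (batched A b s S lo w) M rs
      \<le> w * (1 + (real n / real s + real b) * (1 + c / real b))" .
qed

section \<open>The recursive algorithm\<close>

definition cells :: "real \<Rightarrow> nat \<Rightarrow> nat \<Rightarrow> nat" where
  "cells \<delta> k n = nat \<lfloor>(1 + 2 * real k * \<delta>) * real n\<rfloor>"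

definition bucket_count :: "real \<Rightarrow> nat \<Rightarrow> nat \<Rightarrow> nat" where
  "bucket_count \<delta> k n = nat \<lfloor>(\<delta> * real n) powr (1 / real (Suc (Suc k)))\<rfloor>"

definition batch_size :: "real \<Rightarrow> nat \<Rightarrow> nat \<Rightarrow> nat" where
  "batch_size \<delta> k n = nat \<lfloor>\<delta> * real n / real (bucket_count \<delta> k n)\<rfloor>"

fun sort_alg :: "real \<Rightarrow> nat \<Rightarrow> nat \<Rightarrow> real \<Rightarrow> real \<Rightarrow> online_alg" where
  "sort_alg \<delta> 0 n = (\<lambda>lo w. fill_left)"
| "sort_alg \<delta> (Suc k) n =
     (if \<delta> * real n < 1 then (\<lambda>lo w. fill_left)
      else batched (sort_alg \<delta> k (batch_size \<delta> k n)) (bucket_count \<delta> k n) (batch_size \<delta> k n)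
             (cells \<delta> k (batch_size \<delta> k n)))"

lemma le_cells:
  assumes "0 \<le> \<delta>"
  shows "n \<le> cells \<delta> k n"
proof -
  have "real n \<le> (1 + 2 * real k * \<delta>) * real n" using assms by (simp add: algebra_simps)
  then show ?thesis unfolding cells_def by linarith
qed

lemma powr_inverse_Suc_power: "0 \<le> (x::real) \<Longrightarrow> (x powr (1 / real (Suc m))) ^ Suc m = x"
  by (metis of_nat_0_less_iff powr_inverse_root real_root_pow_pos2 real_root_ge_zero abs_of_nonneg
      zero_less_Suc)

lemma bucket_count_bounds:
  fixes \<delta> :: real and n k :: nat
  assumes "1 \<le> \<delta> * real n"
  defines "t \<equiv> (\<delta> * real n) powr (1 / real (Suc (Suc k)))"
  shows "1 \<le> t" "t ^ Suc (Suc k) = \<delta> * real n" "1 \<le> bucket_count \<delta> k n"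
    and "real (bucket_count \<delta> k n) \<le> t" "t \<le> 2 * real (bucket_count \<delta> k n)"
proof -
  show t1: "1 \<le> t" unfolding t_def using assms by (intro ge_one_powr_ge_zero) auto
  show "t ^ Suc (Suc k) = \<delta> * real n"
    unfolding t_def using assms by (intro powr_inverse_Suc_power) simp
  have b: "real (bucket_count \<delta> k n) = of_int \<lfloor>t\<rfloor>"
    using t1 by (simp add: bucket_count_def t_def)
  moreover have "1 \<le> real_of_int \<lfloor>t\<rfloor>" using t1 by simp
  ultimately show "1 \<le> bucket_count \<delta> k n" "real (bucket_count \<delta> k n) \<le> t"
    "t \<le> 2 * real (bucket_count \<delta> k n)"
    using floor_correct[of t] by linarith+
qed

lemma batch_size_bounds:
  fixes \<delta> :: real and n k :: nat
  assumes "1 \<le> \<delta> * real n"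
  defines "b \<equiv> real (bucket_count \<delta> k n)" and "s \<equiv> batch_size \<delta> k n"
  shows "1 \<le> s" "real s \<le> \<delta> * real n / b" "\<delta> * real n / (2 * b) \<le> real s"
proof -
  define t where "t = (\<delta> * real n) powr (1 / real (Suc (Suc k)))"
  note bc = bucket_count_bounds[of \<delta> n k, OF assms(1), folded t_def b_def]
  have "t \<le> t ^ Suc (Suc k)" using bc(1) by (intro self_le_power) simp_all
  then have "b \<le> \<delta> * real n" using bc by linarith
  then have v: "1 \<le> \<delta> * real n / b" using bc(3) by (simp add: b_def le_divide_eq)
  then have s: "real s = of_int \<lfloor>\<delta> * real n / b\<rfloor>"
    by (simp add: s_def batch_size_def b_def)
  moreover have "1 \<le> real_of_int \<lfloor>\<delta> * real n / b\<rfloor>" using v by simp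
  moreover have "\<delta> * real n / (2 * b) = \<delta> * real n / b / 2" by simp
  ultimately show "1 \<le> s" "real s \<le> \<delta> * real n / b" "\<delta> * real n / (2 * b) \<le> real s"
    using floor_correct[of "\<delta> * real n / b"] by linarith+
qed

lemma cells_batched_fit:
  assumes "0 \<le> \<delta>" "2 * real k * \<delta> \<le> 1" "0 < s" "real b * real s \<le> \<delta> * real n"
  shows "(n div s + b) * cells \<delta> k s \<le> cells \<delta> (Suc k) n"
proof -
  have "real (n div s + b) \<le> real n / real s + real b"
    using of_nat_div_le_of_nat[of n s] by simp
  moreover have "real (cells \<delta> k s) \<le> (1 + 2 * real k * \<delta>) * real s"
    unfolding cells_def using assms(1) by (intro of_nat_floor) simp
  ultimately have "real ((n div s + b) * cells \<delta> k s)
      \<le> (real n / real s + real b) * ((1 + 2 * real k * \<delta>) * real s)"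
    unfolding of_nat_mult by (intro mult_mono) simp_all
  also have "\<dots> = (1 + 2 * real k * \<delta>) * real n + (1 + 2 * real k * \<delta>) * (real b * real s)"
    using assms(3) by (simp add: field_simps)
  also have "\<dots> \<le> (1 + 2 * real k * \<delta>) * real n + 2 * (\<delta> * real n)"
    using assms(2,4) mult_right_mono[of "1 + 2 * real k * \<delta>" 2 "real b * real s"] by simp
  also have "\<dots> = (1 + 2 * real (Suc k) * \<delta>) * real n" by (simp add: algebra_simps)
  finally show ?thesis unfolding cells_def by (rule le_nat_floor)
qed

lemma batch_size_root_le:
  fixes b s :: nat and t :: real
  assumes "1 \<le> t" "t \<le> 2 * real b" "real s \<le> \<delta> * real n / real b"
    and "t ^ Suc (Suc k) = \<delta> * real n"
  shows "real s powr (1 / (real k + 1)) \<le> 2 * t"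
proof -
  have b: "0 < real b" using assms(1,2) by linarith
  have "real s \<le> t * t ^ Suc k / real b" using assms(3,4) by simp
  also have "\<dots> \<le> 2 * t ^ Suc k"
    using assms(1,2) b by (simp add: divide_le_eq mult.commute mult_right_mono)
  also have "\<dots> \<le> (2 * t) ^ Suc k"
    using assms(1) one_le_power[of "2::real" k] by (simp add: power_mult_distrib mult_right_mono)
  finally have "(real s powr (1 / real (Suc k))) ^ Suc k \<le> (2 * t) ^ Suc k"
    by (subst powr_inverse_Suc_power) simp_all
  then have "real s powr (1 / real (Suc k)) \<le> 2 * t"
    by (rule power_le_imp_le_base) (use assms(1) in simp)
  then show ?thesis by (simp add: add.commute)
qed

lemma level_cost_le:
  fixes \<delta> C t u :: real and n s b :: nat
  assumes \<delta>: "0 < \<delta>" "\<delta> < 1" and C: "2 \<le> C" and t: "1 \<le> t" "t \<le> u"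
    and b: "real b \<le> t" "t \<le> 2 * real b"
    and s: "1 \<le> s" "\<delta> * real n / (2 * real b) \<le> real s"
    and root: "real s powr (1 / (real k + 1)) \<le> 2 * t"
  shows "1 + (real n / real s + real b) * (1 + C * real s powr (1 / (real k + 1)) / real b)
      \<le> 16 / \<delta> * C * u"
proof -
  have b0: "0 < real b" using t b by linarith
  have "C * real s powr (1 / (real k + 1)) / real b \<le> C * (2 * t) / (t / 2)"
    using root b C t b0 by (intro frac_le mult_left_mono) auto
  also have "\<dots> = 4 * C" using t by simp
  finally have Z: "1 + C * real s powr (1 / (real k + 1)) / real b \<le> 5 * C" using C by simp
  have "\<delta> * real n \<le> 2 * real b * real s" using s b0 by (simp add: divide_le_eq mult.commute)
  then have "real n / real s \<le> 2 * real b / \<delta>" using s \<delta> by (simp add: field_simps)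
  also have "\<dots> \<le> 2 * t / \<delta>" using b \<delta> by (simp add: divide_right_mono)
  moreover have "real b \<le> t / \<delta>"
  proof -
    have "real b * \<delta> \<le> real b" using \<delta> by (intro mult_left_le) auto
    then show ?thesis using b \<delta> by (simp add: le_divide_eq)
  qed
  ultimately have "real n / real s + real b \<le> 3 * t / \<delta>" by simp
  then have "(real n / real s + real b) * (1 + C * real s powr (1 / (real k + 1)) / real b)
      \<le> 3 * t / \<delta> * (5 * C)"
    using Z t \<delta> C b0 by (intro mult_mono) auto
  also have "\<dots> = 15 * (C * t / \<delta>)" by simp
  moreover have "1 \<le> C * t / \<delta>"
  proof -
    have "1 * 1 \<le> C * t" using C t by (intro mult_mono) auto
    also have "\<dots> \<le> C * t / \<delta>" using \<delta> C t by (simp add: le_divide_eq mult_left_le)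
    finally show ?thesis by simp
  qed
  moreover have "C * t / \<delta> \<le> C * u / \<delta>" using C t \<delta> by (simp add: divide_right_mono)
  moreover have "16 / \<delta> * C * u = 16 * (C * u / \<delta>)" by simp
  ultimately show ?thesis by linarith
qed

lemma fill_left_cost_le_level_bound:
  assumes "0 < \<delta>" "\<delta> < 1/2" "\<delta> * real n < 1" "1 \<le> n"
  shows "real n + 1 \<le> 2 * (16 / \<delta>) ^ Suc k * real n powr (1 / (real (Suc k) + 1))"
proof -
  have "real n + 1 \<le> 2 / \<delta>" using assms by (simp add: field_simps)
  also have "\<dots> \<le> 2 * (16 / \<delta>)" using assms by (simp add: divide_right_mono)
  also have "\<dots> \<le> 2 * (16 / \<delta>) ^ Suc k"
    using assms self_le_power[of "16 / \<delta>" "Suc k"] by simp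
  also have "\<dots> \<le> 2 * (16 / \<delta>) ^ Suc k * real n powr (1 / (real (Suc k) + 1))"
  proof -
    have "1 \<le> real n powr (1 / (real (Suc k) + 1))"
      using assms by (intro ge_one_powr_ge_zero) auto
    then show ?thesis using mult_left_mono[of 1 _ "2 * (16 / \<delta>) ^ Suc k"] assms by simp
  qed
  finally show ?thesis .
qed

lemma sort_alg_interval_sorter:
  assumes \<delta>: "0 < \<delta>" "\<delta> < 1/2"
  shows "2 * (real k - 1) * \<delta> \<le> 1 \<Longrightarrow> 1 \<le> n \<Longrightarrow>
    interval_sorter (sort_alg \<delta> k n) (cells \<delta> k n) n
      (2 * (16 / \<delta>) ^ k * real n powr (1 / (real k + 1)))"
proof (induction k arbitrary: n)
  case 0
  have "interval_sorter (\<lambda>lo w. fill_left) (cells \<delta> 0 n) n (real n + 1)"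
    using \<delta> by (intro interval_sorter_fill_left le_cells) simp
  then show ?case using 0 by (auto elim: interval_sorter_mono)
next
  case (Suc k)
  let ?C = "2 * (16 / \<delta>) ^ k" and ?u = "real n powr (1 / (real (Suc k) + 1))"
  show ?case
  proof (cases "\<delta> * real n < 1")
    case True
    have "real n + 1 \<le> 2 * (16 / \<delta>) ^ Suc k * ?u"
      using fill_left_cost_le_level_bound \<delta> True Suc.prems by blast
    moreover have "interval_sorter (\<lambda>lo w. fill_left) (cells \<delta> (Suc k) n) n (real n + 1)"
      using \<delta> by (intro interval_sorter_fill_left le_cells) simp
    ultimately show ?thesis using True by (auto intro: interval_sorter_mono)
  next
    case False
    define t where "t = (\<delta> * real n) powr (1 / real (Suc (Suc k)))"
    define b where "b = bucket_count \<delta> k n"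
    define s where "s = batch_size \<delta> k n"
    have dn: "1 \<le> \<delta> * real n" using False by simp
    note bc = bucket_count_bounds[of \<delta> n k, OF dn, folded t_def b_def]
    note bs = batch_size_bounds[of \<delta> n k, OF dn, folded b_def s_def]
    have IH: "interval_sorter (sort_alg \<delta> k s) (cells \<delta> k s) s
        (?C * real s powr (1 / (real k + 1)))"
      using Suc.IH[of s] Suc.prems bs(1) \<delta> by (simp add: algebra_simps)
    have fit: "(n div s + b) * cells \<delta> k s \<le> cells \<delta> (Suc k) n"
      using bs Suc.prems \<delta> bc(3) by (intro cells_batched_fit) (simp_all add: field_simps)
    have "interval_sorter (sort_alg \<delta> (Suc k) n) (cells \<delta> (Suc k) n) n
        (1 + (real n / real s + real b) * (1 + ?C * real s powr (1 / (real k + 1)) / real b))"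
      using interval_sorter_batched[OF IH _ _ _ _ fit] bs(1) bc(3) \<delta> le_cells[of \<delta> s k] False
      by (simp add: b_def s_def)
    moreover have "t \<le> ?u"
      unfolding t_def using \<delta> Suc.prems by (simp add: powr_mono2 add.commute)
    then have "1 + (real n / real s + real b) * (1 + ?C * real s powr (1 / (real k + 1)) / real b)
        \<le> 16 / \<delta> * ?C * ?u"
      using \<delta> bc(1,4,5) bs(1,3) batch_size_root_le[OF bc(1,5) bs(2) bc(2)]
      by (intro level_cost_le) simp_all
    ultimately show ?thesis by (auto elim!: interval_sorter_mono)
  qed
qed

lemma two_mul_power_le_powr:
  fixes \<delta> :: real
  assumes "0 < \<delta>" "\<delta> < 1/2"
  shows "2 * (16 / \<delta>) ^ k \<le> \<delta> powr (- 5 * (real k + 1))"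
proof -
  define y where "y = 1 / \<delta>"
  have y: "2 \<le> y" using assms by (simp add: y_def field_simps)
  have "(2::real) ^ 4 \<le> y ^ 4" using y by (intro power_mono) auto
  then have "16 * y \<le> y ^ 4 * y" using y by (intro mult_right_mono) auto
  then have "16 / \<delta> \<le> y ^ 5" by (simp add: y_def eval_nat_numeral)
  then have "2 * (16 / \<delta>) ^ k \<le> y * (y ^ 5) ^ k"
    using y assms by (intro mult_mono power_mono) auto
  also have "\<dots> = y ^ (5 * k + 1)" by (simp add: power_mult power_add)
  also have "\<dots> \<le> y ^ (5 * k + 5)" using y by (intro power_increasing) auto
  also have "\<dots> = y powr real (5 * k + 5)" by (rule powr_realpow[symmetric]) (use y in simp)
  also have "\<dots> = 1 / \<delta> powr (5 * (real k + 1))"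
    using assms by (simp add: y_def powr_divide algebra_simps)
  also have "\<dots> = \<delta> powr (- (5 * (real k + 1)))" by (rule powr_minus_divide[symmetric])
  finally show ?thesis by simp
qed

lemma sort_alg_bound:
  assumes \<delta>: "0 < \<delta>" "\<delta> < 1/2" and \<beta>: "0 < \<beta>" and k: "real k \<le> 1 / (2 * \<delta>) + 1"
    and n: "1 \<le> n" "length rs = n" and rs: "set rs \<subseteq> {\<alpha>..<\<alpha> + \<beta>}"
  shows "places_all (sort_alg \<delta> k n \<alpha> \<beta>) (cells \<delta> k n) rs \<and>
    sort_cost \<alpha> \<beta> (sort_alg \<delta> k n \<alpha> \<beta>) (cells \<delta> k n) rs
      \<le> \<beta> * real n powr (1 / (real k + 1)) * \<delta> powr (- 5 * (real k + 1))"
proof -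
  have "2 * (real k - 1) * \<delta> \<le> 1" using k \<delta> by (simp add: field_simps)
  then have "places_all (sort_alg \<delta> k n \<alpha> \<beta>) (cells \<delta> k n) rs \<and>
      sort_cost \<alpha> \<beta> (sort_alg \<delta> k n \<alpha> \<beta>) (cells \<delta> k n) rs
        \<le> \<beta> * (2 * (16 / \<delta>) ^ k * real n powr (1 / (real k + 1)))"
    using sort_alg_interval_sorter[OF \<delta>] n rs \<beta> unfolding interval_sorter_def by simp
  moreover have "2 * (16 / \<delta>) ^ k * real n powr (1 / (real k + 1))
      \<le> \<delta> powr (- 5 * (real k + 1)) * real n powr (1 / (real k + 1))"
    using two_mul_power_le_powr[OF \<delta>, of k] by (intro mult_right_mono) simp_all
  then have "\<beta> * (2 * (16 / \<delta>) ^ k * real n powr (1 / (real k + 1)))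
      \<le> \<beta> * (\<delta> powr (- 5 * (real k + 1)) * real n powr (1 / (real k + 1)))"
    using \<beta> by (intro mult_left_mono) simp_all
  then have "\<beta> * (2 * (16 / \<delta>) ^ k * real n powr (1 / (real k + 1)))
      \<le> \<beta> * real n powr (1 / (real k + 1)) * \<delta> powr (- 5 * (real k + 1))"
    by (simp only: mult_ac)
  ultimately show ?thesis by (meson order_trans)
qed

theorem lemma11:
  "\<exists>K::real. K > 0 \<and>
    (\<forall>(\<delta>::real) (\<alpha>::real) (\<beta>::real) (k::nat) (n::nat).
       0 < \<delta> \<longrightarrow> \<delta> < 1/2 \<longrightarrow> 0 \<le> \<alpha> \<longrightarrow> 0 < \<beta> \<longrightarrow> \<alpha> + \<beta> \<le> 1 \<longrightarrow>
       1 \<le> k \<longrightarrow> real k \<le> 1 / (2 * \<delta>) + 1 \<longrightarrow> 1 \<le> n \<longrightarrow>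
       (\<exists>A::online_alg.
          \<forall>rs. length rs = n \<longrightarrow> set rs \<subseteq> {\<alpha>..<\<alpha> + \<beta>} \<longrightarrow>
            (let m = nat \<lfloor>(1 + 2 * real k * \<delta>) * real n\<rfloor> in
               places_all A m rs \<and>
               sort_cost \<alpha> \<beta> A m rs
                 \<le> \<beta> * real n powr (1 / (real k + 1)) * \<delta> powr (- K * (real k + 1)))))"
proof (intro exI[of _ 5] conjI allI impI)
  fix \<delta> \<alpha> \<beta> :: real and k n :: nat
  assume "0 < \<delta>" "\<delta> < 1/2" "0 < \<beta>" "real k \<le> 1 / (2 * \<delta>) + 1" "1 \<le> n"
  then show "\<exists>A. \<forall>rs. length rs = n \<longrightarrow> set rs \<subseteq> {\<alpha>..<\<alpha> + \<beta>} \<longrightarrow>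
      (let m = nat \<lfloor>(1 + 2 * real k * \<delta>) * real n\<rfloor> in
         places_all A m rs \<and>
         sort_cost \<alpha> \<beta> A m rs \<le> \<beta> * real n powr (1 / (real k + 1)) * \<delta> powr (- 5 * (real k + 1)))"
    using sort_alg_bound[of \<delta> \<beta> k n _ \<alpha>]
    by (intro exI[of _ "sort_alg \<delta> k n \<alpha> \<beta>"] allI impI) (simp add: cells_def)
qed simp

end
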